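(* A mixed graph $G=(V,D,B)$ is HTC-identifiable if and only if the following procedure terminates with $S=V$: initialize $S=\{v\in V:\mathrm{pa}(v)=\emptyset\}$; repeatedly, for $v=1,2,\dots,m$ in turn, if $v\notin S$, set $A=\big(S\cup(V\setminus\mathrm{htr}(v))\big)\setminus(\{v\}\cup\mathrm{sib}(v))$ and add $v$ to $S$ whenever the maximum flow in $G_{\mathrm{flow}}(v,A)$ has size $|\mathrm{pa}(v)|$; stop when $S=V$ or when a full pass over $v=1,\dots,m$ makes no change to $S$.
   Context: A mixed graph is $G=(V,D,B)$ with $V=[m]$, $D$ directed edges $v\to w$, $B$ symmetric bidirected edges $v\leftrightarrow w$, no self-loops. $\mathrm{pa}(v)=\{w:w\to v\in D\}$, $\mathrm{sib}(v)=\{w:w\leftrightarrow v\in B\}$. A half-trek from $y$ to $w$ is a path $y\leftrightarrow w_0\to w_1\to\cdots\to w_r=w$ (left side $\{y\}$, right side $\{w_0,\dots,w_r\}$) or $y\to w_1\to\cdots\to w_r=w$, $r\ge0$ (left side $\{y\}$, right side $\{y,w_1,\dots,w_r\}$); nodes may repeat. $\mathrm{htr}(v)$ is the set of $w\in V\setminus(\{v\}\cup\mathrm{sib}(v))$ reachable from $v$ by a half-trek. A system of half-treks from $X$ to $Y$: half-treks with distinct sources forming $X$ and distinct targets forming $Y$; no sided intersection: pairwise disjoint left sides and pairwise disjoint right sides. $Y$ satisfies the half-trek criterion w.r.t. $v$ if $|Y|=|\mathrm{pa}(v)|$, $Y\cap(\{v\}\cup\mathrm{sib}(v))=\emptyset$,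 and there is a system of half-treks with no sided intersection from $Y$ to $\mathrm{pa}(v)$. $G$ is HTC-identifiable if there exist $(Y_v:v\in V)$, each satisfying the half-trek criterion w.r.t. $v$, and a total order $\prec$ on $V$ with $w\prec v$ whenever $w\in Y_v\cap\mathrm{htr}(v)$. Flows: in a directed graph with source $s$, sink $t$, node capacities and edge capacities, a flow is a nonnegative edge function respecting edge capacities and, at each node $x\ne s,t$, conservation $\sum_u f(u,x)=\sum_w f(x,w)$ with this value at most the node capacity; its size is the total flow out of $s$. $G_{\mathrm{flow}}(v,A)$ has nodes $s,t$, $L(a)$ for $a\in A$, $R(w)$ for $w\in V$; edges $s\to L(a)$ and $L(a)\to R(a)$ ($a\in A$), $L(a)\to R(w)$ whenever $a\leftrightarrow w\in B$, $R(w)\to R(u)$ whenever $w\to u\in D$, and $R(w)\to t$ for $w\in\mathrm{pa}(v)$. All edges and $s,t$ have capacity $\infty$, all other nodes capacity $1$. *)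

theory Defs
  imports Complex_Main "HOL-Library.While_Combinator"
begin

text \<open>Mixed graph on V = {1..m}: directed edges D (pairs (v,w) meaning v -> w),
  bidirected edges B (symmetric relation).\<close>

definition pa :: "(nat \<times> nat) set \<Rightarrow> nat \<Rightarrow> nat set" where
  "pa D v = {w. (w, v) \<in> D}"

definition sib :: "(nat \<times> nat) set \<Rightarrow> nat \<Rightarrow> nat set" where
  "sib B v = {w. (w, v) \<in> B}"

text \<open>A half-trek with left node y and right-side node list rs (in order):
  either y <-> rs!0 -> rs!1 -> ... (bidirected start), or rs!0 = y and
  y -> rs!1 -> ... (directed; r = 0 allowed). Its target is last rs,
  its left side is {y}, its right side is set rs.\<close>
definition half_trek :: "(nat \<times> nat) set \<Rightarrow> (nat \<times> nat) set \<Rightarrow> nat \<Rightarrow> nat list \<Rightarrow> bool" where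
  "half_trek D B y rs \<longleftrightarrow> rs \<noteq> [] \<and> successively (\<lambda>a b. (a, b) \<in> D) rs
     \<and> (hd rs = y \<or> (y, hd rs) \<in> B)"

definition htr :: "nat \<Rightarrow> (nat \<times> nat) set \<Rightarrow> (nat \<times> nat) set \<Rightarrow> nat \<Rightarrow> nat set" where
  "htr m D B v = {w \<in> {1..m} - ({v} \<union> sib B v). \<exists>rs. half_trek D B v rs \<and> last rs = w}"

text \<open>System of half-treks from X to Y with no sided intersection: one half-trek per
  source y in X (sources distinct), targets distinct and forming Y, left sides {y}
  pairwise disjoint (automatic), right sides pairwise disjoint.\<close>
definition ht_system :: "(nat \<times> nat) set \<Rightarrow> (nat \<times> nat) set \<Rightarrow> nat set \<Rightarrow> nat set \<Rightarrow> bool" where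
  "ht_system D B X Y \<longleftrightarrow> (\<exists>\<pi> :: nat \<Rightarrow> nat list.
      (\<forall>y\<in>X. half_trek D B y (\<pi> y))
    \<and> bij_betw (\<lambda>y. last (\<pi> y)) X Y
    \<and> (\<forall>y\<in>X. \<forall>y'\<in>X. y \<noteq> y' \<longrightarrow> {y} \<inter> {y'} = {} \<and> set (\<pi> y) \<inter> set (\<pi> y') = {}))"

definition htc_criterion :: "nat \<Rightarrow> (nat \<times> nat) set \<Rightarrow> (nat \<times> nat) set \<Rightarrow> nat \<Rightarrow> nat set \<Rightarrow> bool" where
  "htc_criterion m D B v Y \<longleftrightarrow> Y \<subseteq> {1..m} \<and> card Y = card (pa D v)
     \<and> Y \<inter> ({v} \<union> sib B v) = {} \<and> ht_system D B Y (pa D v)"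

definition HTC_identifiable :: "nat \<Rightarrow> (nat \<times> nat) set \<Rightarrow> (nat \<times> nat) set \<Rightarrow> bool" where
  "HTC_identifiable m D B \<longleftrightarrow> (\<exists>(Ys :: nat \<Rightarrow> nat set) (R :: (nat \<times> nat) set).
      (\<forall>v\<in>{1..m}. htc_criterion m D B v (Ys v))
    \<and> strict_linear_order_on {1..m} R
    \<and> (\<forall>v\<in>{1..m}. \<forall>w \<in> Ys v \<inter> htr m D B v. (w, v) \<in> R))"

datatype fnode = Src | Snk | Lnode nat | Rnode nat

definition flow_nodes :: "nat \<Rightarrow> nat set \<Rightarrow> fnode set" where
  "flow_nodes m A = {Src, Snk} \<union> Lnode ` A \<union> Rnode ` {1..m}"

definition flow_edges :: "(nat \<times> nat) set \<Rightarrow> (nat \<times> nat) set \<Rightarrow> nat \<Rightarrow> nat set \<Rightarrow> (fnode \<times> fnode) set" where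
  "flow_edges D B v A =
     {(Src, Lnode a) | a. a \<in> A}
   \<union> {(Lnode a, Rnode a) | a. a \<in> A}
   \<union> {(Lnode a, Rnode w) | a w. a \<in> A \<and> (a, w) \<in> B}
   \<union> {(Rnode w, Rnode u) | w u. (w, u) \<in> D}
   \<union> {(Rnode w, Snk) | w. w \<in> pa D v}"

text \<open>Edge capacities and the capacities of s,t are infinite; all other nodes have
  capacity 1. Flow is nonnegative and supported on the edges.\<close>
definition is_flow :: "nat \<Rightarrow> (nat \<times> nat) set \<Rightarrow> (nat \<times> nat) set \<Rightarrow> nat \<Rightarrow> nat set
    \<Rightarrow> (fnode \<Rightarrow> fnode \<Rightarrow> real) \<Rightarrow> bool" where
  "is_flow m D B v A f \<longleftrightarrow>
     (\<forall>x y. 0 \<le> f x y)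
   \<and> (\<forall>x y. (x, y) \<notin> flow_edges D B v A \<longrightarrow> f x y = 0)
   \<and> (\<forall>x \<in> flow_nodes m A - {Src, Snk}.
        (\<Sum>u\<in>flow_nodes m A. f u x) = (\<Sum>w\<in>flow_nodes m A. f x w)
      \<and> (\<Sum>w\<in>flow_nodes m A. f x w) \<le> 1)"

definition flow_size :: "nat \<Rightarrow> nat set \<Rightarrow> (fnode \<Rightarrow> fnode \<Rightarrow> real) \<Rightarrow> real" where
  "flow_size m A f = (\<Sum>w\<in>flow_nodes m A. f Src w)"

definition max_flow :: "nat \<Rightarrow> (nat \<times> nat) set \<Rightarrow> (nat \<times> nat) set \<Rightarrow> nat \<Rightarrow> nat set \<Rightarrow> real" where
  "max_flow m D B v A = Sup (flow_size m A ` {f. is_flow m D B v A f})"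

definition htc_A :: "nat \<Rightarrow> (nat \<times> nat) set \<Rightarrow> (nat \<times> nat) set \<Rightarrow> nat set \<Rightarrow> nat \<Rightarrow> nat set" where
  "htc_A m D B S v = (S \<union> ({1..m} - htr m D B v)) - ({v} \<union> sib B v)"

definition htc_step :: "nat \<Rightarrow> (nat \<times> nat) set \<Rightarrow> (nat \<times> nat) set \<Rightarrow> nat \<Rightarrow> nat set \<Rightarrow> nat set" where
  "htc_step m D B v S =
     (if v \<notin> S \<and> max_flow m D B v (htc_A m D B S v) = real (card (pa D v))
      then insert v S else S)"

definition htc_pass :: "nat \<Rightarrow> (nat \<times> nat) set \<Rightarrow> (nat \<times> nat) set \<Rightarrow> nat set \<Rightarrow> nat set" where
  "htc_pass m D B S = fold (htc_step m D B) [1..<Suc m] S"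

definition htc_procedure :: "nat \<Rightarrow> (nat \<times> nat) set \<Rightarrow> (nat \<times> nat) set \<Rightarrow> nat set option" where
  "htc_procedure m D B =
     while_option (\<lambda>S. S \<noteq> {1..m} \<and> htc_pass m D B S \<noteq> S) (htc_pass m D B)
       {v \<in> {1..m}. pa D v = {}}"

end

theory Submission
  imports Defs
begin

text \<open>
  The key fact is that this happens exactly when some
  \<open>Y \<subseteq> A\<close> satisfies the half-trek criterion w.r.t. \<open>v\<close>:
  \<^item> a flow of size \<open>|pa(v)|\<close> forces, by weak duality (a node-cut bound), every separator of
    \<open>L(A)\<close> from \<open>R(pa(v))\<close> to have \<open>|pa(v)|\<close> nodes, and Menger's theorem (proved below for
    vertex-disjoint walks in a finite digraph, by induction on the edges) then gives
    \<open>|pa(v)|\<close> disjoint walks, which are exactly a system of half-treks without sided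
    intersection;
  \<^item> conversely such a system, after shortcutting repetitions, carries a flow of that size.
  With this characterisation the procedure maintains a partial certificate (criterion sets
  and a compatible strict linear order on \<open>S\<close>), giving soundness; it always stops, and if
  \<open>G\<close> is HTC-identifiable no stable set other than \<open>V\<close> exists, because the order-least
  vertex outside \<open>S\<close> would pass the flow test.
\<close>

section \<open>Walks, separators and Menger's theorem\<close>

definition walk :: "('a \<times> 'a) set \<Rightarrow> 'a list \<Rightarrow> bool" where
  "walk E p \<longleftrightarrow> p \<noteq> [] \<and> successively (\<lambda>a b. (a, b) \<in> E) p"

definition ab_walk :: "('a \<times> 'a) set \<Rightarrow> 'a set \<Rightarrow> 'a set \<Rightarrow> 'a list \<Rightarrow> bool" where
  "ab_walk E A B p \<longleftrightarrow> walk E p \<and> hd p \<in> A \<and> last p \<in> B"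

definition separates :: "('a \<times> 'a) set \<Rightarrow> 'a set \<Rightarrow> 'a set \<Rightarrow> 'a set \<Rightarrow> bool" where
  "separates E A B X \<longleftrightarrow> (\<forall>p. ab_walk E A B p \<longrightarrow> set p \<inter> X \<noteq> {})"

definition disjoint_walks :: "('a \<times> 'a) set \<Rightarrow> 'a set \<Rightarrow> 'a set \<Rightarrow> 'a list set \<Rightarrow> bool" where
  "disjoint_walks E A B W \<longleftrightarrow> (\<forall>p\<in>W. ab_walk E A B p)
     \<and> (\<forall>p\<in>W. \<forall>q\<in>W. p \<noteq> q \<longrightarrow> set p \<inter> set q = {})"

lemma walk_mono: "walk E p \<Longrightarrow> E \<subseteq> E' \<Longrightarrow> walk E' p"
  unfolding walk_def by (auto elim!: successively_mono)

lemma walk_prefix: "walk E (p @ r) \<Longrightarrow> p \<noteq> [] \<Longrightarrow> walk E p"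
  unfolding walk_def by (simp add: successively_append_iff)

lemma walk_singleton [simp]: "walk E [a]"
  by (simp add: walk_def)

lemma walk_Cons_Cons: "walk E (a # b # p) \<longleftrightarrow> (a, b) \<in> E \<and> walk E (b # p)"
  by (simp add: walk_def)

lemma walk_elems: "walk E p \<Longrightarrow> x \<in> set p \<Longrightarrow> x = hd p \<or> x \<in> snd ` E"
proof (induction p rule: induct_list012)
  case (3 a b p)
  have "walk E (b # p)" "(a, b) \<in> E" using "3.prems" by (auto simp: walk_def)
  then show ?case using "3.IH"(2) "3.prems"(2) by force
qed (auto simp: walk_def)

text \<open>Reversing a walk gives a walk in the converse graph; this lets every statement about
  the end of a walk be derived from the corresponding one about its start.\<close>

lemma walk_rev [simp]: "walk (E\<inverse>) (rev p) \<longleftrightarrow> walk E p"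
  by (simp add: walk_def)

lemma ab_walk_rev [simp]: "ab_walk (E\<inverse>) B A (rev p) \<longleftrightarrow> ab_walk E A B p"
  by (auto simp: ab_walk_def walk_def hd_rev last_rev)

lemma separates_rev [simp]: "separates (E\<inverse>) B A X \<longleftrightarrow> separates E A B X"
  unfolding separates_def by (metis ab_walk_rev converse_converse rev_rev_ident set_rev)

lemma disjoint_walks_rev:
  assumes "disjoint_walks E A B W"
  shows "disjoint_walks (E\<inverse>) B A (rev ` W) \<and> card (rev ` W) = card W"
proof
  show "card (rev ` W) = card W" by (rule card_image) (simp add: inj_on_def)
  show "disjoint_walks (E\<inverse>) B A (rev ` W)"
    using assms unfolding disjoint_walks_def by (simp add: ball_simps)
qed

lemma walk_glue:
  assumes "walk E (p1 @ v # p2)" "walk E (q1 @ v # q2)"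
  shows "walk E (p1 @ v # q2)"
  using assms unfolding walk_def
  by (auto simp: successively_append_iff successively_Cons split: list.splits)

lemma walk_insert_edge:
  "walk (insert (x, y) F) p \<Longrightarrow> x \<notin> set (butlast p) \<Longrightarrow> walk F p"
proof (induction p rule: induct_list012)
  case (3 a b p)
  then show ?case by (auto simp: walk_Cons_Cons)
qed (simp_all add: walk_def)

fun first_hit :: "'a set \<Rightarrow> 'a list \<Rightarrow> 'a list" where
  "first_hit X [] = []"
| "first_hit X (a # p) = (if a \<in> X then [a] else a # first_hit X p)"

lemma first_hit_prefix: "\<exists>r. p = first_hit X p @ r"
  by (induction p) auto

lemma first_hit_props:
  assumes "set p \<inter> X \<noteq> {}"
  shows "first_hit X p \<noteq> [] \<and> last (first_hit X p) \<in> X \<and> set (butlast (first_hit X p)) \<inter> X = {}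
     \<and> hd (first_hit X p) = hd p \<and> set (first_hit X p) \<subseteq> set p"
  using assms by (induction p) auto

lemma walk_first_hit:
  assumes "walk E p" "set p \<inter> X \<noteq> {}"
  shows "walk E (first_hit X p)"
proof -
  obtain r where "p = first_hit X p @ r" using first_hit_prefix by metis
  then show ?thesis using walk_prefix[of E "first_hit X p" r] first_hit_props[OF assms(2)] assms(1)
    by simp
qed

lemma disjoint_choice_bij:
  assumes disj: "\<forall>i\<in>I. \<forall>j\<in>I. i \<noteq> j \<longrightarrow> S i \<inter> S j = {}" and g: "\<forall>i\<in>I. g i \<in> S i \<inter> X"
    and "finite X" "card I = card X"
  shows "bij_betw g I X"
proof -
  have inj: "inj_on g I" unfolding inj_on_def using disj g by (metis IntE disjoint_iff)
  then have "card (g ` I) = card X" using assms(4) card_image by metis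
  then have "g ` I = X" using g assms(3) card_subset_eq by (metis IntE image_subsetI)
  then show ?thesis using inj by (simp add: bij_betw_def)
qed

lemma separates_insert_source:
  assumes "separates F A B Y"
  shows "separates (insert (x, y) F) A B (insert x Y)"
  unfolding separates_def
proof (intro allI impI)
  fix p assume p: "ab_walk (insert (x, y) F) A B p"
  show "set p \<inter> insert x Y \<noteq> {}"
  proof (cases "x \<in> set (butlast p)")
    case False
    then have "ab_walk F A B p" using p walk_insert_edge by (auto simp: ab_walk_def)
    then show ?thesis using assms by (auto simp: separates_def)
  qed (auto dest: in_set_butlastD)
qed

lemma converse_insert_edge: "(insert (x, y) F)\<inverse> = insert (y, x) (F\<inverse>)"
  by auto

lemma separates_insert_target:
  assumes "separates F A B Y"
  shows "separates (insert (x, y) F) A B (insert y Y)"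
  using separates_insert_source[of "F\<inverse>" B A Y y x] assms
  by (simp add: converse_insert_edge[symmetric])

text \<open>If \<open>X'\<close> separates in \<open>F + (x,y)\<close> and contains \<open>x\<close>, then any separator of \<open>A\<close> from
  \<open>X'\<close> in \<open>F\<close> separates \<open>A\<close> from \<open>B\<close> in \<open>F + (x,y)\<close>: cut each walk at its first visit
  to \<open>X'\<close>; the remaining prefix does not use the new edge.\<close>

lemma separates_via_source_cut:
  assumes sX': "separates (insert (x, y) F) A B X'" and x: "x \<in> X'" and sX: "separates F A X' X"
  shows "separates (insert (x, y) F) A B X"
  unfolding separates_def
proof (intro allI impI)
  fix p assume p: "ab_walk (insert (x, y) F) A B p"
  then have hit: "set p \<inter> X' \<noteq> {}" using sX' by (auto simp: separates_def)
  define q where "q = first_hit X' p"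
  have q: "q \<noteq> [] \<and> last q \<in> X' \<and> set (butlast q) \<inter> X' = {} \<and> hd q = hd p \<and> set q \<subseteq> set p"
    using first_hit_props[OF hit] unfolding q_def .
  have "walk (insert (x, y) F) q"
    using walk_first_hit[OF _ hit] p unfolding q_def ab_walk_def by simp
  moreover have "x \<notin> set (butlast q)" using q x by blast
  ultimately have "walk F q" by (rule walk_insert_edge)
  then have "ab_walk F A X' q" using q p by (simp add: ab_walk_def)
  then have "set q \<inter> X \<noteq> {}" using sX by (simp add: separates_def)
  then show "set p \<inter> X \<noteq> {}" using q by blast
qed

lemma separates_via_target_cut:
  assumes "separates (insert (x, y) F) A B X'" "y \<in> X'" "separates F X' B X"
  shows "separates (insert (x, y) F) A B X"
  using separates_via_source_cut[of y x "F\<inverse>" B A X' X] assms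
  by (simp add: converse_insert_edge[symmetric])

lemma first_hit_family:
  assumes W: "disjoint_walks F A X W" and cW: "card W = card X" and fX: "finite X"
  obtains P where
    "\<And>z. z \<in> X \<Longrightarrow> walk F (P z) \<and> hd (P z) \<in> A \<and> last (P z) = z \<and> set (butlast (P z)) \<inter> X = {}"
    "\<And>z z'. z \<in> X \<Longrightarrow> z' \<in> X \<Longrightarrow> z \<noteq> z' \<Longrightarrow> set (P z) \<inter> set (P z') = {}"
proof -
  have ab: "\<And>p. p \<in> W \<Longrightarrow> ab_walk F A X p"
    and disj: "\<forall>p\<in>W. \<forall>q\<in>W. p \<noteq> q \<longrightarrow> set p \<inter> set q = {}"
    using W by (auto simp: disjoint_walks_def)
  have hit: "\<And>p. p \<in> W \<Longrightarrow> set p \<inter> X \<noteq> {}"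
    using ab by (metis ab_walk_def disjoint_iff last_in_set walk_def)
  define W' where "W' = first_hit X ` W"
  have W': "\<And>q. q \<in> W' \<Longrightarrow> \<exists>p\<in>W. q = first_hit X p" unfolding W'_def by blast
  have good: "walk F q \<and> hd q \<in> A \<and> last q \<in> X \<and> set (butlast q) \<inter> X = {}" if q: "q \<in> W'" for q
  proof -
    obtain p where p: "p \<in> W" "q = first_hit X p" using W'[OF q] by blast
    then show ?thesis
      using first_hit_props[OF hit[OF p(1)]] walk_first_hit[OF _ hit[OF p(1)]] ab[OF p(1)]
      by (auto simp: ab_walk_def)
  qed
  have sub: "set (first_hit X p) \<subseteq> set p" "first_hit X p \<noteq> []" if "p \<in> W" for p
    using first_hit_props[OF hit[OF that]] by blast+
  have disj': "\<forall>q\<in>W'. \<forall>q'\<in>W'. q \<noteq> q' \<longrightarrow> set q \<inter> set q' = {}"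
  proof (intro ballI impI)
    fix q q' assume q: "q \<in> W'" "q' \<in> W'" "q \<noteq> q'"
    obtain p p' where p: "p \<in> W" "p' \<in> W" "q = first_hit X p" "q' = first_hit X p'"
      using W'[OF q(1)] W'[OF q(2)] by blast
    then have "p \<noteq> p'" using q(3) by auto
    then have "set p \<inter> set p' = {}" using disj p(1,2) by auto
    then show "set q \<inter> set q' = {}" using sub[OF p(1)] sub[OF p(2)] p(3,4) by auto
  qed
  have "inj_on (first_hit X) W"
  proof (rule inj_onI, rule ccontr)
    fix p q assume pq: "p \<in> W" "q \<in> W" "first_hit X p = first_hit X q" "p \<noteq> q"
    then have "set (first_hit X p) \<subseteq> set p \<inter> set q" using sub[OF pq(1)] sub[OF pq(2)] by simp
    then show False using disj sub[OF pq(1)] pq by auto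
  qed
  then have "card W' = card X" unfolding W'_def using cW card_image by metis
  moreover have "\<forall>q\<in>W'. last q \<in> set q \<inter> X" using good by (auto simp: walk_def)
  ultimately have bij: "bij_betw last W' X" using disjoint_choice_bij[of W' set, OF disj' _ fX] by blast
  define P where "P = inv_into W' last"
  have P: "P z \<in> W' \<and> last (P z) = z" if "z \<in> X" for z
    using bij that unfolding P_def by (metis bij_betw_def f_inv_into_f inv_into_into)
  show ?thesis
  proof (rule that)
    fix z assume "z \<in> X"
    then show "walk F (P z) \<and> hd (P z) \<in> A \<and> last (P z) = z \<and> set (butlast (P z)) \<inter> X = {}"
      using P good[of "P z"] by simp
  next
    fix z z' assume z: "z \<in> X" "z' \<in> X" "z \<noteq> z'"
    then have "P z \<noteq> P z'" using P by metis
    then show "set (P z) \<inter> set (P z') = {}" using disj' P[OF z(1)] P[OF z(2)] by simp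
  qed
qed

lemma last_hit_family:
  assumes W: "disjoint_walks F X B W" and cW: "card W = card X" and fX: "finite X"
  obtains Q where
    "\<And>z. z \<in> X \<Longrightarrow> walk F (Q z) \<and> hd (Q z) = z \<and> last (Q z) \<in> B \<and> set (tl (Q z)) \<inter> X = {}"
    "\<And>z z'. z \<in> X \<Longrightarrow> z' \<in> X \<Longrightarrow> z \<noteq> z' \<Longrightarrow> set (Q z) \<inter> set (Q z') = {}"
proof -
  have "disjoint_walks (F\<inverse>) B X (rev ` W)" "card (rev ` W) = card X"
    using disjoint_walks_rev[OF W] cW by simp_all
  then obtain P where
    P: "\<And>z. z \<in> X \<Longrightarrow> walk (F\<inverse>) (P z) \<and> hd (P z) \<in> B \<and> last (P z) = z \<and> set (butlast (P z)) \<inter> X = {}"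
    and Pdisj: "\<And>z z'. z \<in> X \<Longrightarrow> z' \<in> X \<Longrightarrow> z \<noteq> z' \<Longrightarrow> set (P z) \<inter> set (P z') = {}"
    using first_hit_family fX by blast
  have "walk F (rev (P z)) \<and> hd (rev (P z)) = z \<and> last (rev (P z)) \<in> B
      \<and> set (tl (rev (P z))) \<inter> X = {}" if "z \<in> X" for z
  proof -
    have "walk F (rev (P z))" using walk_rev[of "F\<inverse>" "P z"] P[OF that] by simp
    moreover have "set (tl (rev (P z))) = set (butlast (P z))"
      using butlast_rev[of "rev (P z)"] by simp
    ultimately show ?thesis using P[OF that] by (simp add: hd_rev last_rev)
  qed
  moreover have "set (rev (P z)) \<inter> set (rev (P z')) = {}" if "z \<in> X" "z' \<in> X" "z \<noteq> z'" for z z'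
    using Pdisj[OF that] by simp
  ultimately show ?thesis using that[of "\<lambda>z. rev (P z)"] by blast
qed

text \<open>Let \<open>Y\<close> separate \<open>A\<close> from \<open>B\<close>. If a walk from \<open>A\<close> avoiding \<open>Y\<close> except possibly at its
  end meets a walk to \<open>B\<close> avoiding \<open>Y\<close> except possibly at its start, they meet only at the
  end of the first, which is the start of the second, and lies in \<open>Y\<close>; otherwise gluing
  them would give an \<open>A\<close>-\<open>B\<close> walk avoiding \<open>Y\<close>.\<close>

lemma crossing_in_separator:
  assumes sY: "separates F A B Y"
    and p: "walk F p" "hd p \<in> A" "set (butlast p) \<inter> Y = {}"
    and q: "walk F q" "last q \<in> B" "set (tl q) \<inter> Y = {}"
    and v: "v \<in> set p" "v \<in> set q"
  shows "v \<in> Y \<and> v = last p \<and> v = hd q"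
proof -
  obtain p1 p2 where pd: "p = p1 @ v # p2" using v(1) split_list by metis
  obtain q1 q2 where qd: "q = q1 @ v # q2" using v(2) split_list by metis
  have "walk F (p1 @ v # q2)" using walk_glue p(1) q(1) pd qd by metis
  moreover have "hd (p1 @ v # q2) = hd p" using pd by (cases p1) auto
  moreover have "last (p1 @ v # q2) = last q" using qd by (cases q2) auto
  ultimately have "ab_walk F A B (p1 @ v # q2)" using p q by (simp add: ab_walk_def)
  then have "set (p1 @ v # q2) \<inter> Y \<noteq> {}" using sY unfolding separates_def by blast
  moreover have "set p1 \<subseteq> set (butlast p)" using pd by (simp add: butlast_append)
  moreover have "set q2 \<subseteq> set (tl q)" using qd by (cases q1) auto
  ultimately have vY: "v \<in> Y" using p(3) q(3) by auto
  then have "v \<notin> set (butlast p)" "v \<notin> set (tl q)" using p(3) q(3) by auto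
  moreover have "v = last p \<or> v \<in> set (butlast p)" using v(1) by (induction p) auto
  moreover have "v = hd q \<or> v \<in> set (tl q)" using v(2) by (cases q) auto
  ultimately show ?thesis using vY by blast
qed

lemma walk_append_edge:
  "walk E p \<Longrightarrow> walk E q \<Longrightarrow> (last p, hd q) \<in> E \<Longrightarrow> walk E (p @ q)"
  by (auto simp: walk_def successively_append_iff)

lemma walk_join:
  assumes "walk E p" "walk E q" "last p = hd q"
  shows "walk E (p @ tl q) \<and> last (p @ tl q) = last q"
  using assms by (cases q) (auto simp: walk_def successively_append_iff successively_Cons)

lemma disjoint_walks_mono: "disjoint_walks E A B W \<Longrightarrow> E \<subseteq> E' \<Longrightarrow> disjoint_walks E' A B W"
  unfolding disjoint_walks_def ab_walk_def using walk_mono by metis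

text \<open>Core of the induction step of Menger's theorem. Joining \<open>P z\<close> with \<open>Q z\<close> for
  \<open>z \<in> Y\<close>, and \<open>P x\<close> with \<open>Q y\<close> along the new edge, gives \<open>|Y| + 1\<close> disjoint \<open>A\<close>-\<open>B\<close> walks
  in \<open>F + (x,y)\<close>; they are disjoint by the crossing lemma.\<close>

lemma join_across_edge:
  assumes sY: "separates F A B Y" and fY: "finite Y" and xy: "x \<notin> Y" "y \<notin> Y"
    and P: "\<And>z. z \<in> insert x Y \<Longrightarrow>
      walk F (P z) \<and> hd (P z) \<in> A \<and> last (P z) = z \<and> set (butlast (P z)) \<inter> insert x Y = {}"
    and Pdisj: "\<And>z z'. z \<in> insert x Y \<Longrightarrow> z' \<in> insert x Y \<Longrightarrow> z \<noteq> z' \<Longrightarrow> set (P z) \<inter> set (P z') = {}"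
    and Q: "\<And>z. z \<in> insert y Y \<Longrightarrow>
      walk F (Q z) \<and> hd (Q z) = z \<and> last (Q z) \<in> B \<and> set (tl (Q z)) \<inter> insert y Y = {}"
    and Qdisj: "\<And>z z'. z \<in> insert y Y \<Longrightarrow> z' \<in> insert y Y \<Longrightarrow> z \<noteq> z' \<Longrightarrow> set (Q z) \<inter> set (Q z') = {}"
  shows "\<exists>W. card W = card (insert x Y) \<and> finite W \<and> disjoint_walks (insert (x, y) F) A B W"
proof -
  define h where "h z = (if z = x then y else z)" for z
  define g where "g z = (if z = x then P x @ Q y else P z @ tl (Q z))" for z
  have hz: "h z \<in> insert y Y" if "z \<in> insert x Y" for z
    using that by (auto simp: h_def)
  have gset: "set (g z) \<subseteq> set (P z) \<union> set (Q (h z))" for z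
    by (cases "Q z") (auto simp: g_def h_def)
  have gwalk: "ab_walk (insert (x, y) F) A B (g z)" if z: "z \<in> insert x Y" for z
  proof (cases "z = x")
    case True
    have "walk (insert (x, y) F) (P x @ Q y)"
      by (rule walk_append_edge) (use P[of x] Q[of y] walk_mono[of F _ "insert (x, y) F"] in auto)
    then show ?thesis using True P[of x] Q[of y] by (auto simp: ab_walk_def g_def walk_def)
  next
    case False
    then have "z \<in> Y" using z by simp
    then have "walk F (P z @ tl (Q z)) \<and> last (P z @ tl (Q z)) = last (Q z)"
      using walk_join[of F "P z" "Q z"] P[of z] Q[of z] by simp
    then show ?thesis using False P[OF z] Q[of z] \<open>z \<in> Y\<close> walk_mono[of F _ "insert (x, y) F"]
      by (auto simp: ab_walk_def g_def walk_def)
  qed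
  have cross: "set (P z) \<inter> set (Q (h z')) = {}" if zz: "z \<in> insert x Y" "z' \<in> insert x Y" "z \<noteq> z'"
    for z z'
  proof (rule ccontr)
    assume "set (P z) \<inter> set (Q (h z')) \<noteq> {}"
    then obtain v where v: "v \<in> set (P z)" "v \<in> set (Q (h z'))" by blast
    have "v \<in> Y \<and> v = last (P z) \<and> v = hd (Q (h z'))"
      by (rule crossing_in_separator[OF sY _ _ _ _ _ _ v]) (use P[OF zz(1)] Q[OF hz[OF zz(2)]] in auto)
    then show False using P[OF zz(1)] Q[OF hz[OF zz(2)]] xy zz by (auto simp: h_def split: if_splits)
  qed
  have gdisj: "set (g z) \<inter> set (g z') = {}" if zz: "z \<in> insert x Y" "z' \<in> insert x Y" "z \<noteq> z'"
    for z z'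
  proof -
    have "h z \<noteq> h z'" using zz xy by (auto simp: h_def)
    then have "set (Q (h z)) \<inter> set (Q (h z')) = {}" using Qdisj hz zz by blast
    moreover have "set (P z) \<inter> set (P z') = {}" using Pdisj[OF zz] .
    moreover have "set (P z) \<inter> set (Q (h z')) = {}" using cross[OF zz] .
    moreover have "set (P z') \<inter> set (Q (h z)) = {}" using cross[OF zz(2,1)] zz(3) by simp
    ultimately show ?thesis using gset[of z] gset[of z'] by blast
  qed
  have "inj_on g (insert x Y)"
  proof (rule inj_onI, rule ccontr)
    fix z z' assume zz: "z \<in> insert x Y" "z' \<in> insert x Y" "g z = g z'" "z \<noteq> z'"
    then have "set (g z) = {}" using gdisj[OF zz(1,2,4)] by simp
    then show False using gwalk[OF zz(1)] by (simp add: ab_walk_def walk_def)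
  qed
  then have "card (g ` insert x Y) = card (insert x Y)" by (rule card_image)
  moreover have "disjoint_walks (insert (x, y) F) A B (g ` insert x Y)"
    unfolding disjoint_walks_def using gwalk gdisj by (metis imageE)
  moreover have "finite (g ` insert x Y)" using fY by simp
  ultimately show ?thesis by blast
qed

lemma walk_empty_iff: "walk {} p \<longleftrightarrow> (\<exists>a. p = [a])"
  by (cases p; cases "tl p") (auto simp: walk_def)

text \<open>Without edges the walks are single vertices, so \<open>A \<inter> B\<close> is a separator and any \<open>k\<close> of
  its elements give \<open>k\<close> disjoint walks.\<close>

lemma menger_no_edges:
  assumes "finite A" "\<And>X. finite X \<Longrightarrow> separates {} A B X \<Longrightarrow> k \<le> card X"
  shows "\<exists>W. card W = k \<and> finite W \<and> disjoint_walks {} A B W"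
proof -
  have "separates {} A B (A \<inter> B)"
    unfolding separates_def ab_walk_def walk_empty_iff by auto
  then have "k \<le> card (A \<inter> B)" using assms by simp
  then obtain S where S: "S \<subseteq> A \<inter> B" "card S = k" using obtain_subset_with_card_n by metis
  have "finite S" using S(1) assms(1) finite_subset by blast
  moreover have "card ((\<lambda>a. [a]) ` S) = k" using S by (simp add: card_image inj_on_def)
  moreover have "disjoint_walks {} A B ((\<lambda>a. [a]) ` S)"
    using S(1) by (auto simp: disjoint_walks_def ab_walk_def)
  ultimately show ?thesis by blast
qed

text \<open>Induction on the edge set: when the new edge \<open>(x,y)\<close> is needed, a small separator \<open>Y\<close> of
  the old graph yields the tight separators \<open>Y + x\<close> and \<open>Y + y\<close>, to which the induction
  hypothesis is applied on both sides.\<close>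

theorem menger_walks:
  assumes "finite E" "finite A" "\<And>X. finite X \<Longrightarrow> separates E A B X \<Longrightarrow> k \<le> card X"
  shows "\<exists>W. card W = k \<and> finite W \<and> disjoint_walks E A B W"
  using assms
proof (induction E arbitrary: A B k rule: finite_induct)
  case empty
  then show ?case by (rule menger_no_edges)
next
  case (insert e F)
  obtain x y where e: "e = (x, y)" by fastforce
  show ?case
  proof (cases "\<forall>X. finite X \<longrightarrow> separates F A B X \<longrightarrow> k \<le> card X")
    case True
    then obtain W where "card W = k" "finite W" "disjoint_walks F A B W"
      using insert.IH insert.prems(1) by blast
    then show ?thesis using disjoint_walks_mono[of F A B W "insert e F"] by blast
  next
    case False
    then obtain Y where fY: "finite Y" and sY: "separates F A B Y" and cY: "card Y < k"
      by force
    have bound: "k \<le> card X" if "finite X" "separates (insert (x, y) F) A B X" for X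
      using insert.prems(2) that e by simp
    define Xx where "Xx = insert x Y"
    define Xy where "Xy = insert y Y"
    have sXx: "separates (insert e F) A B Xx" and sXy: "separates (insert e F) A B Xy"
      unfolding Xx_def Xy_def e
      by (rule separates_insert_source[OF sY], rule separates_insert_target[OF sY])
    have "k \<le> card Xx" "k \<le> card Xy" using insert.prems(2) sXx sXy fY by (auto simp: Xx_def Xy_def)
    moreover have "card Xx \<le> Suc (card Y)" "card Xy \<le> Suc (card Y)"
      using fY by (simp_all add: Xx_def Xy_def card_insert_if)
    ultimately have cX: "card Xx = k" "card Xy = k" using cY by linarith+
    then have xy: "x \<notin> Y" "y \<notin> Y" using cY by (auto simp: Xx_def Xy_def insert_absorb)
    have "k \<le> card X" if "finite X" "separates F A Xx X" for X
      using bound separates_via_source_cut[OF sXx[unfolded e]] that by (simp add: Xx_def)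
    then obtain W1 where "card W1 = card Xx" "disjoint_walks F A Xx W1"
      using insert.IH[of A Xx k] insert.prems(1) cX by auto
    then obtain P where
      P: "\<And>z. z \<in> Xx \<Longrightarrow> walk F (P z) \<and> hd (P z) \<in> A \<and> last (P z) = z \<and> set (butlast (P z)) \<inter> Xx = {}"
      and Pdisj: "\<And>z z'. z \<in> Xx \<Longrightarrow> z' \<in> Xx \<Longrightarrow> z \<noteq> z' \<Longrightarrow> set (P z) \<inter> set (P z') = {}"
      using first_hit_family fY by (metis Xx_def finite_insert)
    have "k \<le> card X" if "finite X" "separates F Xy B X" for X
      using bound separates_via_target_cut[OF sXy[unfolded e]] that by (simp add: Xy_def)
    then obtain W2 where "card W2 = card Xy" "disjoint_walks F Xy B W2"
      using insert.IH[of Xy B k] fY cX by (auto simp: Xy_def)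
    then obtain Q where
      Q: "\<And>z. z \<in> Xy \<Longrightarrow> walk F (Q z) \<and> hd (Q z) = z \<and> last (Q z) \<in> B \<and> set (tl (Q z)) \<inter> Xy = {}"
      and Qdisj: "\<And>z z'. z \<in> Xy \<Longrightarrow> z' \<in> Xy \<Longrightarrow> z \<noteq> z' \<Longrightarrow> set (Q z) \<inter> set (Q z') = {}"
      using last_hit_family fY by (metis Xy_def finite_insert)
    show ?thesis
      using join_across_edge[OF sY fY xy P[unfolded Xx_def] Pdisj[unfolded Xx_def]
          Q[unfolded Xy_def] Qdisj[unfolded Xy_def]] cX e by (simp add: Xx_def Xy_def)
  qed
qed

section \<open>Flows versus disjoint walks in the network \<open>G_flow(v, A)\<close>\<close>

text \<open>A node-capacity cut bound: if \<open>Z\<close> contains the source but not the sink and flow can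
  leave \<open>Z\<close> only into the node set \<open>X\<close> of capacity-1 nodes, the flow out of \<open>s\<close> is at most
  \<open>|X|\<close>. (Conservation inside \<open>Z\<close> turns the source outflow into the net outflow of \<open>Z\<close>.)\<close>

lemma node_cut_bound:
  fixes f :: "'n \<Rightarrow> 'n \<Rightarrow> real"
  assumes fN: "finite N" and nonneg: "\<And>x y. 0 \<le> f x y" and no_in_s: "\<And>u. f u s = 0"
    and cons: "\<And>x. x \<in> N - {s, t} \<Longrightarrow> (\<Sum>u\<in>N. f u x) = (\<Sum>w\<in>N. f x w) \<and> (\<Sum>w\<in>N. f x w) \<le> 1"
    and Z: "Z \<subseteq> N" "s \<in> Z" "t \<notin> Z" and X: "X \<subseteq> N - {s, t}"
    and closed: "\<And>z u. z \<in> Z \<Longrightarrow> u \<in> N \<Longrightarrow> u \<notin> Z \<Longrightarrow> u \<notin> X \<Longrightarrow> f z u = 0"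
  shows "(\<Sum>w\<in>N. f s w) \<le> card X"
proof -
  define out where "out z = (\<Sum>w\<in>N. f z w)" for z
  define inn where "inn z = (\<Sum>w\<in>N. f w z)" for z
  have fZ: "finite Z" and fX: "finite X" using Z X fN finite_subset by blast+
  have inner_zero: "out z - inn z = 0" if "z \<in> Z - {s}" for z
  proof -
    have "z \<in> N - {s, t}" using that Z by auto
    then show ?thesis using cons[of z] unfolding out_def inn_def by simp
  qed
  have "out s = (\<Sum>z\<in>Z. out z - inn z)"
    using sum.remove[OF fZ Z(2), of "\<lambda>z. out z - inn z"] inner_zero no_in_s
    by (simp add: inn_def)
  also have "\<dots> = (\<Sum>z\<in>Z. \<Sum>u\<in>N - Z. f z u) + ((\<Sum>z\<in>Z. \<Sum>u\<in>Z. f z u) - (\<Sum>z\<in>Z. inn z))"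
  proof -
    have "out z = (\<Sum>u\<in>N - Z. f z u) + (\<Sum>u\<in>Z. f z u)" for z
      unfolding out_def using sum.subset_diff[OF Z(1) fN] by blast
    then show ?thesis by (simp add: sum.distrib sum_subtractf)
  qed
  also have "\<dots> \<le> (\<Sum>z\<in>Z. \<Sum>u\<in>N - Z. f z u)"
  proof -
    have "(\<Sum>z\<in>Z. \<Sum>u\<in>Z. f z u) = (\<Sum>z\<in>Z. \<Sum>u\<in>Z. f u z)" by (rule sum.swap)
    also have "\<dots> \<le> (\<Sum>z\<in>Z. inn z)"
      unfolding inn_def by (rule sum_mono, rule sum_mono2[OF fN Z(1)]) (simp add: nonneg)
    finally show ?thesis by simp
  qed
  also have "\<dots> \<le> (\<Sum>z\<in>Z. \<Sum>u\<in>X. f z u)"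
  proof (rule sum_mono)
    fix z assume z: "z \<in> Z"
    have "(\<Sum>u\<in>N - Z. f z u) = (\<Sum>u\<in>(N - Z) \<inter> X. f z u)"
      by (rule sum.mono_neutral_right) (use fN closed z in auto)
    also have "\<dots> \<le> (\<Sum>u\<in>X. f z u)" by (rule sum_mono2[OF fX]) (auto simp: nonneg)
    finally show "(\<Sum>u\<in>N - Z. f z u) \<le> (\<Sum>u\<in>X. f z u)" .
  qed
  also have "\<dots> = (\<Sum>u\<in>X. \<Sum>z\<in>Z. f z u)" by (rule sum.swap)
  also have "\<dots> \<le> (\<Sum>u\<in>X. inn u)"
    unfolding inn_def by (rule sum_mono, rule sum_mono2[OF fN Z(1)]) (simp add: nonneg)
  also have "\<dots> \<le> (\<Sum>u\<in>X. 1)"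
    by (rule sum_mono) (use cons X in \<open>force simp: inn_def\<close>)
  finally show ?thesis unfolding out_def by simp
qed

text \<open>Flows in \<open>G_flow(v, A)\<close> correspond to disjoint walks here from
  \<open>L(A)\<close> to \<open>R(pa(v))\<close>.\<close>

definition inner_edges :: "(nat \<times> nat) set \<Rightarrow> (nat \<times> nat) set \<Rightarrow> nat set \<Rightarrow> (fnode \<times> fnode) set" where
  "inner_edges D B A = {(Lnode a, Rnode a) | a. a \<in> A} \<union> {(Lnode a, Rnode w) | a w. a \<in> A \<and> (a, w) \<in> B}
     \<union> {(Rnode w, Rnode u) | w u. (w, u) \<in> D}"

lemma flow_edge_inner:
  "(z, u) \<in> flow_edges D B v A \<Longrightarrow> z \<noteq> Src \<Longrightarrow> u \<noteq> Snk \<Longrightarrow> (z, u) \<in> inner_edges D B A"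
  unfolding flow_edges_def inner_edges_def by blast

lemma finite_flow_nodes: "finite A \<Longrightarrow> finite (flow_nodes m A)"
  by (simp add: flow_nodes_def)

lemma finite_inner_edges:
  assumes "D \<subseteq> {1..m} \<times> {1..m}" "B \<subseteq> {1..m} \<times> {1..m}" "A \<subseteq> {1..m}"
  shows "finite (inner_edges D B A)"
proof (rule finite_subset)
  show "inner_edges D B A \<subseteq> (Lnode ` {1..m} \<union> Rnode ` {1..m}) \<times> (Lnode ` {1..m} \<union> Rnode ` {1..m})"
    using assms unfolding inner_edges_def by auto
qed simp

lemma inner_walk_nodes:
  assumes "D \<subseteq> {1..m} \<times> {1..m}" "B \<subseteq> {1..m} \<times> {1..m}" "A \<subseteq> {1..m}"
    and "walk (inner_edges D B A) p" "hd p \<in> Lnode ` A"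
  shows "set p \<subseteq> flow_nodes m A - {Src, Snk}"
proof
  fix x assume "x \<in> set p"
  then have "x = hd p \<or> x \<in> snd ` inner_edges D B A" by (rule walk_elems[OF assms(4)])
  moreover have "snd ` inner_edges D B A \<subseteq> Rnode ` {1..m}"
    using assms(1-3) unfolding inner_edges_def by auto
  ultimately have "x \<in> Lnode ` A \<union> Rnode ` {1..m}" using assms(5) by auto
  then show "x \<in> flow_nodes m A - {Src, Snk}" unfolding flow_nodes_def by blast
qed

definition reach_avoiding :: "('a \<times> 'a) set \<Rightarrow> 'a set \<Rightarrow> 'a set \<Rightarrow> 'a set" where
  "reach_avoiding E S X = {z. \<exists>p. walk E p \<and> hd p \<in> S \<and> last p = z \<and> set p \<inter> X = {}}"

lemma network_edge_from_reach:
  assumes sep: "separates (inner_edges D B A) (Lnode ` A) (Rnode ` pa D v) X"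
    and e: "(z, u) \<in> flow_edges D B v A" and u: "u \<notin> X"
    and z: "z \<in> insert Src (reach_avoiding (inner_edges D B A) (Lnode ` A) X)"
  shows "u \<in> reach_avoiding (inner_edges D B A) (Lnode ` A) X"
proof (cases "z = Src")
  case True
  then have "u \<in> Lnode ` A" using e unfolding flow_edges_def by blast
  then have "walk (inner_edges D B A) [u] \<and> hd [u] \<in> Lnode ` A \<and> last [u] = u \<and> set [u] \<inter> X = {}"
    using u by simp
  then show ?thesis unfolding reach_avoiding_def by blast
next
  case False
  then obtain p where p: "walk (inner_edges D B A) p" "hd p \<in> Lnode ` A" "last p = z" "set p \<inter> X = {}"
    using z unfolding reach_avoiding_def by auto
  have "u \<noteq> Snk"
  proof
    assume "u = Snk"
    then have "z \<in> Rnode ` pa D v" using e unfolding flow_edges_def by blast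
    then have "ab_walk (inner_edges D B A) (Lnode ` A) (Rnode ` pa D v) p" using p by (simp add: ab_walk_def)
    then show False using sep p(4) by (auto simp: separates_def)
  qed
  then have "(z, u) \<in> inner_edges D B A" using flow_edge_inner[OF e False] by blast
  then have "walk (inner_edges D B A) (p @ [u])" using p(1,3) walk_append_edge by fastforce
  moreover have "hd (p @ [u]) \<in> Lnode ` A" using p by (auto simp: walk_def)
  ultimately show ?thesis using u p(4) unfolding reach_avoiding_def by force
qed

lemma sink_not_reached: "Snk \<notin> reach_avoiding (inner_edges D B A) (Lnode ` A) X"
proof
  assume "Snk \<in> reach_avoiding (inner_edges D B A) (Lnode ` A) X"
  then obtain p where p: "walk (inner_edges D B A) p" "hd p \<in> Lnode ` A" "last p = Snk"
    unfolding reach_avoiding_def by auto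
  have "Snk = hd p \<or> Snk \<in> snd ` inner_edges D B A"
    using walk_elems[OF p(1)] p(1,3) by (metis last_in_set walk_def)
  then show False using p(2) by (auto simp: inner_edges_def)
qed

text \<open>Weak duality: the size of any flow is bounded by the size of any set of inner nodes
  separating \<open>L(A)\<close> from \<open>R(pa(v))\<close>; apply the node-cut bound to the source side above.\<close>

lemma flow_le_separator:
  assumes VA: "A \<subseteq> {1..m}" and f: "is_flow m D B v A f"
    and X: "X \<subseteq> flow_nodes m A - {Src, Snk}"
      "separates (inner_edges D B A) (Lnode ` A) (Rnode ` pa D v) X"
  shows "flow_size m A f \<le> card X"
proof -
  define N where "N = flow_nodes m A"
  define Z where "Z = insert Src (reach_avoiding (inner_edges D B A) (Lnode ` A) X \<inter> N)"
  have fN: "finite N" unfolding N_def using VA finite_subset finite_flow_nodes by blast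
  have zero: "\<And>x y. (x, y) \<notin> flow_edges D B v A \<Longrightarrow> f x y = 0" using f by (simp add: is_flow_def)
  have closed: "f z u = 0" if z: "z \<in> Z" and u: "u \<in> N" "u \<notin> Z" "u \<notin> X" for z u
  proof (rule ccontr)
    assume "f z u \<noteq> 0"
    then have "(z, u) \<in> flow_edges D B v A" using zero by blast
    then have "u \<in> reach_avoiding (inner_edges D B A) (Lnode ` A) X"
      using network_edge_from_reach[OF X(2) _ u(3)] z unfolding Z_def by blast
    then show False using u unfolding Z_def by blast
  qed
  have "(\<Sum>w\<in>N. f Src w) \<le> card X"
  proof (rule node_cut_bound[OF fN, where t = Snk and Z = Z])
    show "\<And>x y. 0 \<le> f x y" using f by (simp add: is_flow_def)
    show "\<And>u. f u Src = 0" by (rule zero) (simp add: flow_edges_def)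
    show "\<And>x. x \<in> N - {Src, Snk} \<Longrightarrow> (\<Sum>u\<in>N. f u x) = (\<Sum>w\<in>N. f x w) \<and> (\<Sum>w\<in>N. f x w) \<le> 1"
      using f unfolding is_flow_def N_def by blast
    show "Z \<subseteq> N" "Src \<in> Z" by (auto simp: Z_def N_def flow_nodes_def)
    show "Snk \<notin> Z" using sink_not_reached by (simp add: Z_def)
    show "X \<subseteq> N - {Src, Snk}" using X(1) by (simp add: N_def)
  qed (use closed in blast)
  then show ?thesis by (simp add: flow_size_def N_def)
qed

lemma pa_subset: "D \<subseteq> {1..m} \<times> {1..m} \<Longrightarrow> pa D v \<subseteq> {1..m}"
  unfolding pa_def by auto

text \<open>In particular no flow exceeds \<open>|pa(v)|\<close>, as \<open>R(pa(v))\<close> itself is a separator.\<close>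

lemma flow_le_card_pa:
  assumes "D \<subseteq> {1..m} \<times> {1..m}" "A \<subseteq> {1..m}" "is_flow m D B v A f"
  shows "flow_size m A f \<le> card (pa D v)"
proof -
  have "flow_size m A f \<le> card (Rnode ` pa D v)"
  proof (rule flow_le_separator[OF assms(2,3)])
    show "Rnode ` pa D v \<subseteq> flow_nodes m A - {Src, Snk}"
      using pa_subset[OF assms(1)] by (auto simp: flow_nodes_def)
    show "separates (inner_edges D B A) (Lnode ` A) (Rnode ` pa D v) (Rnode ` pa D v)"
      unfolding separates_def ab_walk_def walk_def by (metis disjoint_iff last_in_set)
  qed
  also have "card (Rnode ` pa D v) = card (pa D v)" by (rule card_image) (simp add: inj_on_def)
  finally show ?thesis .
qed

text \<open>The maximum flow is a supremum over a nonempty (the zero flow) bounded set.\<close>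

lemma max_flow_le:
  assumes "\<And>f. is_flow m D B v A f \<Longrightarrow> flow_size m A f \<le> c"
  shows "max_flow m D B v A \<le> c"
  unfolding max_flow_def
proof (rule cSup_least)
  have "is_flow m D B v A (\<lambda>x y. 0)" by (simp add: is_flow_def)
  then show "flow_size m A ` {f. is_flow m D B v A f} \<noteq> {}" by blast
qed (use assms in auto)

lemma max_flow_ge:
  assumes "D \<subseteq> {1..m} \<times> {1..m}" "A \<subseteq> {1..m}" "is_flow m D B v A f"
  shows "flow_size m A f \<le> max_flow m D B v A"
  unfolding max_flow_def
proof (rule cSup_upper)
  show "bdd_above (flow_size m A ` {f. is_flow m D B v A f})"
    using flow_le_card_pa[OF assms(1,2)] by (auto intro!: bdd_aboveI)
qed (use assms(3) in auto)

lemma inner_walk_from_R: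
  "walk (inner_edges D B A) (Rnode w # q) \<Longrightarrow>
    \<exists>rs. q = map Rnode rs \<and> successively (\<lambda>a b. (a, b) \<in> D) (w # rs)"
proof (induction q arbitrary: w)
  case (Cons c q)
  have e: "(Rnode w, c) \<in> inner_edges D B A" and wc: "walk (inner_edges D B A) (c # q)"
    using Cons.prems by (auto simp: walk_Cons_Cons)
  obtain u where u: "c = Rnode u" "(w, u) \<in> D" using e by (auto simp: inner_edges_def)
  obtain rs where "q = map Rnode rs" "successively (\<lambda>a b. (a, b) \<in> D) (u # rs)"
    using Cons.IH wc u by blast
  then show ?case using u by (intro exI[of _ "u # rs"]) simp
qed simp

lemma inner_walk_half_trek:
  assumes "walk (inner_edges D B A) p" "hd p = Lnode a" "last p \<in> Rnode ` S"
  shows "\<exists>rs. p = Lnode a # map Rnode rs \<and> half_trek D B a rs"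
proof -
  obtain c q where p: "p = Lnode a # c # q"
    using assms by (cases p; cases "tl p") (auto simp: walk_def)
  have e: "(Lnode a, c) \<in> inner_edges D B A" and wc: "walk (inner_edges D B A) (c # q)"
    using assms(1) p by (auto simp: walk_Cons_Cons)
  obtain u where u: "c = Rnode u" "u = a \<or> (a, u) \<in> B" using e by (auto simp: inner_edges_def)
  obtain rs where "q = map Rnode rs" "successively (\<lambda>a b. (a, b) \<in> D) (u # rs)"
    using inner_walk_from_R wc u by blast
  then show ?thesis using u p by (intro exI[of _ "u # rs"]) (auto simp: half_trek_def)
qed

lemma inner_walks_decompose:
  assumes ab: "\<And>p. p \<in> W \<Longrightarrow> ab_walk (inner_edges D B A) (Lnode ` A) (Rnode ` P) p"
  shows "\<exists>src trek. \<forall>p\<in>W.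
    src p \<in> A \<and> p = Lnode (src p) # map Rnode (trek p) \<and> half_trek D B (src p) (trek p)"
proof -
  have "\<forall>p\<in>W. \<exists>c. fst c \<in> A \<and> p = Lnode (fst c) # map Rnode (snd c) \<and> half_trek D B (fst c) (snd c)"
  proof
    fix p assume p: "p \<in> W"
    then obtain a where a: "a \<in> A" "hd p = Lnode a" using ab by (auto simp: ab_walk_def)
    then show "\<exists>c. fst c \<in> A \<and> p = Lnode (fst c) # map Rnode (snd c) \<and> half_trek D B (fst c) (snd c)"
      using inner_walk_half_trek[of D B A p a P] ab[OF p] by (auto simp: ab_walk_def)
  qed
  then obtain c where "\<And>p. p \<in> W \<Longrightarrow> fst (c p) \<in> A \<and> p = Lnode (fst (c p)) # map Rnode (snd (c p))
      \<and> half_trek D B (fst (c p)) (snd (c p))"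
    by metis
  then show ?thesis by (intro exI[of _ "\<lambda>p. fst (c p)"] exI[of _ "\<lambda>p. snd (c p)"]) blast
qed

text \<open>Disjoint inner walks from \<open>L(A)\<close> to \<open>R(P)\<close>, as many as \<open>|P|\<close>, are a system of half-treks
  with no sided intersection from a subset of \<open>A\<close> to \<open>P\<close>: the sources are distinct because the
  walks start at distinct \<open>L\<close>-nodes, the right sides are disjoint because the walks are.\<close>

lemma disjoint_walks_system:
  assumes W: "disjoint_walks (inner_edges D B A) (Lnode ` A) (Rnode ` P) W"
    and cW: "card W = card P" and fP: "finite P"
  shows "\<exists>Y \<subseteq> A. card Y = card P \<and> ht_system D B Y P"
proof -
  have ab: "\<And>p. p \<in> W \<Longrightarrow> ab_walk (inner_edges D B A) (Lnode ` A) (Rnode ` P) p"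
    and disj: "\<forall>p\<in>W. \<forall>q\<in>W. p \<noteq> q \<longrightarrow> set p \<inter> set q = {}"
    using W by (auto simp: disjoint_walks_def)
  obtain src trek where dec: "\<forall>p\<in>W.
      src p \<in> A \<and> p = Lnode (src p) # map Rnode (trek p) \<and> half_trek D B (src p) (trek p)"
    using inner_walks_decompose[OF ab] by blast
  have form: "src p \<in> A" "p = Lnode (src p) # map Rnode (trek p)" "half_trek D B (src p) (trek p)"
    if "p \<in> W" for p
    using dec that by auto
  have set_p: "set p = insert (Lnode (src p)) (Rnode ` set (trek p))" if "p \<in> W" for p
    using arg_cong[OF form(2)[OF that], of set] by simp
  have last_p: "last p = Rnode (last (trek p))" if "p \<in> W" for p
  proof -
    have "trek p \<noteq> []" using form(3)[OF that] by (simp add: half_trek_def)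
    then show ?thesis using arg_cong[OF form(2)[OF that], of last] by (simp add: last_map)
  qed
  have src_inj: "inj_on src W"
  proof (rule inj_onI, rule ccontr)
    fix p q assume pq: "p \<in> W" "q \<in> W" "src p = src q" "p \<noteq> q"
    then have "Lnode (src p) \<in> set p \<inter> set q" using set_p[OF pq(1)] set_p[OF pq(2)] by simp
    then show False using disj pq by blast
  qed
  define Y where "Y = src ` W"
  define w where "w y = inv_into W src y" for y
  define \<pi> where "\<pi> y = trek (w y)" for y
  have w: "w y \<in> W" "src (w y) = y" if "y \<in> Y" for y
    using that unfolding Y_def w_def by (simp_all add: inv_into_into f_inv_into_f)
  have ht: "half_trek D B y (\<pi> y)" if "y \<in> Y" for y
    using form(3)[OF w(1)[OF that]] w(2)[OF that] unfolding \<pi>_def by simp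
  have rdisj: "set (\<pi> y) \<inter> set (\<pi> y') = {}" if y: "y \<in> Y" "y' \<in> Y" "y \<noteq> y'" for y y'
  proof -
    have "w y \<noteq> w y'" using w y by metis
    then have "set (w y) \<inter> set (w y') = {}" using disj w(1)[OF y(1)] w(1)[OF y(2)] by blast
    then show ?thesis using set_p[OF w(1)[OF y(1)]] set_p[OF w(1)[OF y(2)]] unfolding \<pi>_def by blast
  qed
  have lastP: "last (\<pi> y) \<in> set (\<pi> y) \<inter> P" if "y \<in> Y" for y
  proof -
    have "last (w y) \<in> Rnode ` P" using ab w(1)[OF that] by (simp add: ab_walk_def)
    then have "last (\<pi> y) \<in> P" using last_p[OF w(1)[OF that]] unfolding \<pi>_def by auto
    moreover have "\<pi> y \<noteq> []" using ht[OF that] by (simp add: half_trek_def)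
    ultimately show ?thesis by simp
  qed
  have cY: "card Y = card P" unfolding Y_def using card_image[OF src_inj] cW by simp
  have "bij_betw (\<lambda>y. last (\<pi> y)) Y P"
    by (rule disjoint_choice_bij[of Y "\<lambda>y. set (\<pi> y)"]) (use rdisj lastP fP cY in auto)
  then have "ht_system D B Y P" unfolding ht_system_def using ht rdisj by blast
  moreover have "Y \<subseteq> A" unfolding Y_def using form(1) by blast
  ultimately show ?thesis using cY by blast
qed

text \<open>If the maximum flow in \<open>G_flow(v, A)\<close> equals \<open>|pa(v)|\<close>, then some subset of \<open>A\<close> satisfies
  the half-trek criterion with respect to \<open>v\<close>: by weak duality every separator has at least
  \<open>|pa(v)|\<close> nodes, so Menger's theorem yields \<open>|pa(v)|\<close> disjoint inner walks.\<close>

lemma criterion_of_max_flow: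
  assumes VD: "D \<subseteq> {1..m} \<times> {1..m}" and VB: "B \<subseteq> {1..m} \<times> {1..m}" and VA: "A \<subseteq> {1..m}"
    and Av: "A \<inter> ({v} \<union> sib B v) = {}" and mf: "max_flow m D B v A = real (card (pa D v))"
  shows "\<exists>Y \<subseteq> A. htc_criterion m D B v Y"
proof -
  define H where "H = inner_edges D B A"
  have fA: "finite A" using VA finite_subset by blast
  have fpa: "finite (pa D v)" using pa_subset[OF VD] finite_subset by blast
  have bound: "card (pa D v) \<le> card X"
    if fX: "finite X" and sX: "separates H (Lnode ` A) (Rnode ` pa D v) X" for X
  proof -
    define X' where "X' = X \<inter> (flow_nodes m A - {Src, Snk})"
    have sX': "separates H (Lnode ` A) (Rnode ` pa D v) X'"
      unfolding separates_def
    proof (intro allI impI)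
      fix p assume p: "ab_walk H (Lnode ` A) (Rnode ` pa D v) p"
      then have "set p \<inter> X \<noteq> {}" using sX by (simp add: separates_def)
      moreover have "set p \<subseteq> flow_nodes m A - {Src, Snk}"
        using inner_walk_nodes[OF VD VB VA] p by (simp add: ab_walk_def H_def)
      ultimately show "set p \<inter> X' \<noteq> {}" unfolding X'_def by blast
    qed
    have "max_flow m D B v A \<le> card X'"
    proof (rule max_flow_le)
      fix f assume "is_flow m D B v A f"
      then show "flow_size m A f \<le> card X'"
        by (rule flow_le_separator[OF VA _ _ sX'[unfolded H_def]]) (simp add: X'_def)
    qed
    moreover have "card X' \<le> card X" unfolding X'_def using fX by (simp add: card_mono)
    ultimately show ?thesis using mf by linarith
  qed
  obtain W where "card W = card (pa D v)" "disjoint_walks H (Lnode ` A) (Rnode ` pa D v) W"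
    using menger_walks[OF finite_inner_edges[OF VD VB VA] finite_imageI[OF fA] bound[unfolded H_def]]
    unfolding H_def by blast
  then obtain Y where Y: "Y \<subseteq> A" "card Y = card (pa D v)" "ht_system D B Y (pa D v)"
    using disjoint_walks_system[of D B A "pa D v" W] fpa unfolding H_def by metis
  then have "htc_criterion m D B v Y" using VA Av by (auto simp: htc_criterion_def)
  then show ?thesis using Y(1) by blast
qed

lemma distinct_shortcut:
  "successively P xs \<Longrightarrow> xs \<noteq> [] \<Longrightarrow> \<exists>ys. distinct ys \<and> ys \<noteq> [] \<and> hd ys = hd xs \<and> last ys = last xs
     \<and> set ys \<subseteq> set xs \<and> successively P ys"
proof (induction "length xs" arbitrary: xs rule: less_induct)
  case less
  show ?case
  proof (cases "distinct xs")
    case False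
    then obtain a y b c where xs: "xs = a @ [y] @ b @ [y] @ c" using not_distinct_decomp by blast
    define xs' where "xs' = a @ [y] @ c"
    have "successively P xs'"
      using less.prems(1) unfolding xs xs'_def
      by (auto simp: successively_append_iff successively_Cons split: if_splits)
    moreover have "xs' \<noteq> []" "length xs' < length xs" by (simp_all add: xs xs'_def)
    ultimately obtain ys where ys: "distinct ys \<and> ys \<noteq> [] \<and> hd ys = hd xs' \<and> last ys = last xs'
       \<and> set ys \<subseteq> set xs' \<and> successively P ys" using less.hyps by blast
    have "hd xs' = hd xs" by (cases a) (auto simp: xs xs'_def)
    moreover have "last xs' = last xs" by (cases c) (auto simp: xs xs'_def)
    moreover have "set xs' \<subseteq> set xs" by (auto simp: xs xs'_def)
    ultimately show ?thesis using ys by auto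
  qed (use less.prems in blast)
qed

definition consecutive :: "'a list \<Rightarrow> 'a \<Rightarrow> 'a \<Rightarrow> bool" where
  "consecutive p x z \<longleftrightarrow> (x, z) \<in> set (zip p (tl p))"

lemma consecutive_Nil [simp]: "\<not> consecutive [] x z"
  by (simp add: consecutive_def)

lemma consecutive_Cons: "consecutive (a # p) x z \<longleftrightarrow> (p \<noteq> [] \<and> x = a \<and> z = hd p) \<or> consecutive p x z"
  by (cases p) (auto simp: consecutive_def)

lemma consecutive_set: "consecutive p x z \<Longrightarrow> x \<in> set p \<and> z \<in> set p"
  by (induction p) (auto simp: consecutive_Cons)

lemma consecutive_successively: "successively R p \<Longrightarrow> consecutive p x z \<Longrightarrow> R x z"
  by (induction p rule: induct_list012) (auto simp: consecutive_Cons)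

lemma count_steps_into:
  "distinct p \<Longrightarrow> finite N \<Longrightarrow> set p \<subseteq> N \<Longrightarrow>
    (\<Sum>u\<in>N. if consecutive p u x then 1 else 0 :: real) = (if x \<in> set (tl p) then 1 else 0)"
proof (induction p)
  case (Cons a p)
  have aN: "a \<in> N" and anp: "a \<notin> set p" using Cons.prems by auto
  have "\<And>u. (if consecutive (a # p) u x then 1 else 0 :: real) =
          (if u = a then (if p \<noteq> [] \<and> x = hd p then 1 else 0) else 0) + (if consecutive p u x then 1 else 0)"
    using anp by (auto simp: consecutive_Cons dest: consecutive_set)
  then have "(\<Sum>u\<in>N. if consecutive (a # p) u x then 1 else 0 :: real) =
      (\<Sum>u\<in>N. (if u = a then (if p \<noteq> [] \<and> x = hd p then 1 else 0) else 0))
      + (\<Sum>u\<in>N. if consecutive p u x then 1 else 0)"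
    by (simp add: sum.distrib)
  also have "\<dots> = (if p \<noteq> [] \<and> x = hd p then 1 else 0) + (if x \<in> set (tl p) then 1 else 0)"
    using Cons aN by (simp add: sum.delta)
  also have "\<dots> = (if x \<in> set (tl (a # p)) then 1 else 0)"
    using Cons.prems(1) by (cases p) auto
  finally show ?case .
qed simp

lemma count_steps_out_of:
  "distinct p \<Longrightarrow> finite N \<Longrightarrow> set p \<subseteq> N \<Longrightarrow>
    (\<Sum>w\<in>N. if consecutive p x w then 1 else 0 :: real) = (if x \<in> set (butlast p) then 1 else 0)"
proof (induction p)
  case (Cons a p)
  have anp: "a \<notin> set p" using Cons.prems by auto
  have "\<And>w. (if consecutive (a # p) x w then 1 else 0 :: real) =
          (if w = hd p then (if p \<noteq> [] \<and> x = a then 1 else 0) else 0) + (if consecutive p x w then 1 else 0)"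
    using anp by (auto simp: consecutive_Cons dest: consecutive_set)
  then have "(\<Sum>w\<in>N. if consecutive (a # p) x w then 1 else 0 :: real) =
      (\<Sum>w\<in>N. (if w = hd p then (if p \<noteq> [] \<and> x = a then 1 else 0) else 0))
      + (\<Sum>w\<in>N. if consecutive p x w then 1 else 0)"
    by (simp add: sum.distrib)
  also have "\<dots> = (if p \<noteq> [] \<and> x = a then 1 else 0) + (if x \<in> set (butlast p) then 1 else 0)"
    using Cons by (cases p) (simp_all add: sum.delta)
  also have "\<dots> = (if x \<in> set (butlast (a # p)) then 1 else 0)"
  proof (cases p)
    case (Cons b q)
    have "x = a \<Longrightarrow> x \<notin> set (butlast p)" using anp by (auto dest: in_set_butlastD)
    then show ?thesis using Cons by auto
  qed simp
  finally show ?case .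
qed simp

lemma family_step_counts:
  fixes P :: "'i \<Rightarrow> 'a list"
  assumes fN: "finite N" and P: "\<And>y. y \<in> Y \<Longrightarrow> distinct (P y) \<and> set (P y) \<subseteq> N"
  shows "(\<Sum>u\<in>N. \<Sum>y\<in>Y. if consecutive (P y) u x then 1 else 0 :: real)
      = (\<Sum>y\<in>Y. if x \<in> set (tl (P y)) then 1 else 0)"
    and "(\<Sum>w\<in>N. \<Sum>y\<in>Y. if consecutive (P y) x w then 1 else 0 :: real)
      = (\<Sum>y\<in>Y. if x \<in> set (butlast (P y)) then 1 else 0)"
proof -
  have "(\<Sum>u\<in>N. \<Sum>y\<in>Y. if consecutive (P y) u x then 1 else 0 :: real)
      = (\<Sum>y\<in>Y. \<Sum>u\<in>N. if consecutive (P y) u x then 1 else 0)" by (rule sum.swap)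
  also have "\<dots> = (\<Sum>y\<in>Y. if x \<in> set (tl (P y)) then 1 else 0)"
  proof (rule sum.cong[OF refl])
    fix y assume "y \<in> Y"
    then show "(\<Sum>u\<in>N. if consecutive (P y) u x then 1 else 0 :: real) = (if x \<in> set (tl (P y)) then 1 else 0)"
      using count_steps_into[OF _ fN, of "P y" x] P by simp
  qed
  finally show "(\<Sum>u\<in>N. \<Sum>y\<in>Y. if consecutive (P y) u x then 1 else 0 :: real)
      = (\<Sum>y\<in>Y. if x \<in> set (tl (P y)) then 1 else 0)" .
  have "(\<Sum>w\<in>N. \<Sum>y\<in>Y. if consecutive (P y) x w then 1 else 0 :: real)
      = (\<Sum>y\<in>Y. \<Sum>w\<in>N. if consecutive (P y) x w then 1 else 0)" by (rule sum.swap)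
  also have "\<dots> = (\<Sum>y\<in>Y. if x \<in> set (butlast (P y)) then 1 else 0)"
  proof (rule sum.cong[OF refl])
    fix y assume "y \<in> Y"
    then show "(\<Sum>w\<in>N. if consecutive (P y) x w then 1 else 0 :: real)
        = (if x \<in> set (butlast (P y)) then 1 else 0)"
      using count_steps_out_of[OF _ fN, of "P y" x] P by simp
  qed
  finally show "(\<Sum>w\<in>N. \<Sum>y\<in>Y. if consecutive (P y) x w then 1 else 0 :: real)
      = (\<Sum>y\<in>Y. if x \<in> set (butlast (P y)) then 1 else 0)" .
qed

lemma disjoint_count_le_1:
  assumes "finite Y" "\<And>y y'. y \<in> Y \<Longrightarrow> y' \<in> Y \<Longrightarrow> y \<noteq> y' \<Longrightarrow> M y \<inter> M y' = {}"
  shows "(\<Sum>y\<in>Y. if x \<in> M y then 1 else 0 :: real) \<le> 1"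
proof (cases "\<exists>y0\<in>Y. x \<in> M y0")
  case True
  then obtain y0 where y0: "y0 \<in> Y" "x \<in> M y0" by blast
  have "(\<Sum>y\<in>Y - {y0}. if x \<in> M y then 1 else 0 :: real) = 0"
  proof (rule sum.neutral, rule ballI)
    fix y assume y: "y \<in> Y - {y0}"
    then have "M y \<inter> M y0 = {}" using assms(2) y0(1) by blast
    then show "(if x \<in> M y then 1 else 0 :: real) = 0" using y0(2) by auto
  qed
  then show ?thesis
    using sum.remove[OF assms(1) y0(1), of "\<lambda>y. if x \<in> M y then 1 else 0 :: real"] y0 by simp
qed simp

lemma path_family_flow:
  assumes fA: "finite A" and fY: "finite Y"
    and path: "\<And>y. y \<in> Y \<Longrightarrow> distinct (Src # mid y @ [Snk]) \<and> set (mid y) \<subseteq> flow_nodes m A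
      \<and> successively (\<lambda>a b. (a, b) \<in> flow_edges D B v A) (Src # mid y @ [Snk])"
    and disj: "\<And>y y'. y \<in> Y \<Longrightarrow> y' \<in> Y \<Longrightarrow> y \<noteq> y' \<Longrightarrow> set (mid y) \<inter> set (mid y') = {}"
  defines "f \<equiv> \<lambda>x z. \<Sum>y\<in>Y. if consecutive (Src # mid y @ [Snk]) x z then 1 else 0 :: real"
  shows "is_flow m D B v A f \<and> flow_size m A f = card Y"
proof -
  define N where "N = flow_nodes m A"
  have fN: "finite N" unfolding N_def using fA by (rule finite_flow_nodes)
  have ends: "Src \<in> N" "Snk \<in> N" unfolding N_def flow_nodes_def by simp_all
  have pN: "distinct (Src # mid y @ [Snk]) \<and> set (Src # mid y @ [Snk]) \<subseteq> N" if "y \<in> Y" for y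
  proof -
    have "set (mid y) \<subseteq> N" using path[OF that] by (simp add: N_def)
    then show ?thesis using ends path[OF that] by simp
  qed
  have inflow: "(\<Sum>u\<in>N. f u x) = (\<Sum>y\<in>Y. if x \<in> set (mid y @ [Snk]) then 1 else 0)" for x
    using family_step_counts(1)[OF fN pN, where x = x] unfolding f_def by simp
  have outflow: "(\<Sum>w\<in>N. f x w) = (\<Sum>y\<in>Y. if x \<in> set (Src # mid y) then 1 else 0)" for x
    using family_step_counts(2)[OF fN pN, where x = x] unfolding f_def by (simp add: butlast_append)
  have "is_flow m D B v A f"
    unfolding is_flow_def
  proof (intro conjI allI impI ballI)
    fix x z show "0 \<le> f x z" unfolding f_def by (simp add: sum_nonneg)
  next
    fix x z assume xz: "(x, z) \<notin> flow_edges D B v A"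
    have "\<not> consecutive (Src # mid y @ [Snk]) x z" if "y \<in> Y" for y
      using consecutive_successively[of "\<lambda>a b. (a, b) \<in> flow_edges D B v A" _ x z] path[OF that] xz
      by blast
    then show "f x z = 0" unfolding f_def by simp
  next
    fix x assume x: "x \<in> flow_nodes m A - {Src, Snk}"
    then have "(\<Sum>u\<in>N. f u x) = (\<Sum>y\<in>Y. if x \<in> set (mid y) then 1 else 0)"
      "(\<Sum>w\<in>N. f x w) = (\<Sum>y\<in>Y. if x \<in> set (mid y) then 1 else 0)"
      using inflow[of x] outflow[of x] by simp_all
    moreover have "(\<Sum>y\<in>Y. if x \<in> set (mid y) then 1 else 0 :: real) \<le> 1"
      by (rule disjoint_count_le_1[OF fY disj])
    ultimately show "(\<Sum>u\<in>flow_nodes m A. f u x) = (\<Sum>w\<in>flow_nodes m A. f x w)"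
      "(\<Sum>w\<in>flow_nodes m A. f x w) \<le> 1" unfolding N_def by simp_all
  qed
  moreover have "flow_size m A f = card Y"
    unfolding flow_size_def using outflow[of Src] by (simp add: N_def)
  ultimately show ?thesis by blast
qed

text \<open>Conversely, a set \<open>Y \<subseteq> A\<close> satisfying the half-trek criterion w.r.t. \<open>v\<close> yields a flow of
  size \<open>|pa(v)|\<close>: route one unit along \<open>s \<rightarrow> L(y) \<rightarrow> R(\<pi>(y)) \<rightarrow> t\<close> for each half-trek \<open>\<pi>(y)\<close>,
  after shortcutting \<open>\<pi>(y)\<close> to a repetition-free walk.\<close>

lemma max_flow_of_criterion:
  assumes VD: "D \<subseteq> {1..m} \<times> {1..m}" and VB: "B \<subseteq> {1..m} \<times> {1..m}" and VA: "A \<subseteq> {1..m}"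
    and YA: "Y \<subseteq> A" and hc: "htc_criterion m D B v Y"
  shows "real (card (pa D v)) \<le> max_flow m D B v A"
proof -
  obtain \<pi> where ht: "\<And>y. y \<in> Y \<Longrightarrow> half_trek D B y (\<pi> y)"
    and bij: "bij_betw (\<lambda>y. last (\<pi> y)) Y (pa D v)"
    and dj: "\<And>y y'. y \<in> Y \<Longrightarrow> y' \<in> Y \<Longrightarrow> y \<noteq> y' \<Longrightarrow> set (\<pi> y) \<inter> set (\<pi> y') = {}"
    using hc unfolding htc_criterion_def ht_system_def by metis
  have fA: "finite A" using VA finite_subset by blast
  have fY: "finite Y" using YA fA finite_subset by blast
  define short where "short y rs \<longleftrightarrow> distinct rs \<and> rs \<noteq> [] \<and> hd rs = hd (\<pi> y) \<and> last rs = last (\<pi> y)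
     \<and> set rs \<subseteq> set (\<pi> y) \<and> successively (\<lambda>a b. (a, b) \<in> D) rs" for y rs
  define \<rho> where "\<rho> y = (SOME rs. short y rs)" for y
  have \<rho>: "short y (\<rho> y)" if "y \<in> Y" for y
  proof -
    have "\<exists>rs. short y rs" unfolding short_def
      by (rule distinct_shortcut) (use ht[OF that] in \<open>auto simp: half_trek_def\<close>)
    then show ?thesis unfolding \<rho>_def by (rule someI_ex)
  qed
  have \<pi>V: "set (\<pi> y) \<subseteq> {1..m}" if y: "y \<in> Y" for y
  proof
    fix x assume x: "x \<in> set (\<pi> y)"
    have "hd (\<pi> y) = y \<or> (y, hd (\<pi> y)) \<in> B" using ht[OF y] by (simp add: half_trek_def)
    then have "hd (\<pi> y) \<in> {1..m}" using y YA VA VB by auto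
    moreover have "walk D (\<pi> y)" using ht[OF y] by (simp add: half_trek_def walk_def)
    ultimately show "x \<in> {1..m}" using walk_elems[of D "\<pi> y" x] x VD by auto
  qed
  define mid where "mid y = Lnode y # map Rnode (\<rho> y)" for y
  have path: "distinct (Src # mid y @ [Snk]) \<and> set (mid y) \<subseteq> flow_nodes m A
      \<and> successively (\<lambda>a b. (a, b) \<in> flow_edges D B v A) (Src # mid y @ [Snk])" if y: "y \<in> Y" for y
  proof (intro conjI)
    show "distinct (Src # mid y @ [Snk])" using \<rho>[OF y] by (auto simp: mid_def short_def distinct_map inj_on_def)
    have "set (\<rho> y) \<subseteq> {1..m}" using \<rho>[OF y] \<pi>V[OF y] by (auto simp: short_def)
    then show "set (mid y) \<subseteq> flow_nodes m A" using y YA by (auto simp: mid_def flow_nodes_def)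
    have r: "\<rho> y \<noteq> []" "successively (\<lambda>a b. (a, b) \<in> D) (\<rho> y)" "last (\<rho> y) \<in> pa D v"
      "hd (\<rho> y) = y \<or> (y, hd (\<rho> y)) \<in> B"
      using \<rho>[OF y] ht[OF y] bij y by (auto simp: short_def half_trek_def bij_betw_def)
    then obtain r0 rs where r0: "\<rho> y = r0 # rs" by (cases "\<rho> y") auto
    have "successively (\<lambda>a b. (a, b) \<in> flow_edges D B v A) (map Rnode (\<rho> y) @ [Snk])"
      using r unfolding successively_append_iff successively_map
      by (auto elim!: successively_mono simp: flow_edges_def last_map)
    moreover have "(Src, Lnode y) \<in> flow_edges D B v A" "(Lnode y, Rnode r0) \<in> flow_edges D B v A"
      using y YA r(4) r0 unfolding flow_edges_def by auto
    ultimately show "successively (\<lambda>a b. (a, b) \<in> flow_edges D B v A) (Src # mid y @ [Snk])"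
      using r0 by (simp add: mid_def)
  qed
  have disj: "set (mid y) \<inter> set (mid y') = {}" if "y \<in> Y" "y' \<in> Y" "y \<noteq> y'" for y y'
    using \<rho>[OF that(1)] \<rho>[OF that(2)] dj[OF that] that(3) by (auto simp: short_def mid_def)
  obtain f where "is_flow m D B v A f" "flow_size m A f = card Y"
    using path_family_flow[of A Y mid, OF fA fY path disj] by blast
  moreover have "card Y = card (pa D v)" using hc by (simp add: htc_criterion_def)
  ultimately show ?thesis using max_flow_ge[OF VD VA] by metis
qed

section \<open>The procedure\<close>

lemma max_flow_criterion_iff:
  assumes VD: "D \<subseteq> {1..m} \<times> {1..m}" and VB: "B \<subseteq> {1..m} \<times> {1..m}" and VA: "A \<subseteq> {1..m}"
    and Av: "A \<inter> ({v} \<union> sib B v) = {}"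
  shows "max_flow m D B v A = real (card (pa D v)) \<longleftrightarrow> (\<exists>Y \<subseteq> A. htc_criterion m D B v Y)"
proof
  assume "max_flow m D B v A = real (card (pa D v))"
  then show "\<exists>Y \<subseteq> A. htc_criterion m D B v Y" by (rule criterion_of_max_flow[OF VD VB VA Av])
next
  assume "\<exists>Y \<subseteq> A. htc_criterion m D B v Y"
  then have "real (card (pa D v)) \<le> max_flow m D B v A"
    using max_flow_of_criterion[OF VD VB VA] by blast
  moreover have "max_flow m D B v A \<le> real (card (pa D v))"
    by (rule max_flow_le) (rule flow_le_card_pa[OF VD VA])
  ultimately show "max_flow m D B v A = real (card (pa D v))" by simp
qed

lemma htc_A_subset: "S \<subseteq> {1..m} \<Longrightarrow> htc_A m D B S v \<subseteq> {1..m}"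
  unfolding htc_A_def by auto

lemma htc_A_avoids: "htc_A m D B S v \<inter> ({v} \<union> sib B v) = {}"
  unfolding htc_A_def by auto

lemma htc_step_iff:
  assumes "D \<subseteq> {1..m} \<times> {1..m}" "B \<subseteq> {1..m} \<times> {1..m}" "S \<subseteq> {1..m}"
  shows "htc_step m D B v S =
    (if v \<notin> S \<and> (\<exists>Y \<subseteq> htc_A m D B S v. htc_criterion m D B v Y) then insert v S else S)"
  unfolding htc_step_def using max_flow_criterion_iff[OF assms(1,2) htc_A_subset[OF assms(3)] htc_A_avoids] by simp

lemma htc_step_bounds: "S \<subseteq> htc_step m D B v S" "htc_step m D B v S \<subseteq> insert v S"
  unfolding htc_step_def by auto

lemma fold_steps_bounds:
  "set xs \<subseteq> {1..m} \<Longrightarrow> S \<subseteq> {1..m} \<Longrightarrow>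
    S \<subseteq> fold (htc_step m D B) xs S \<and> fold (htc_step m D B) xs S \<subseteq> {1..m}"
proof (induction xs arbitrary: S)
  case (Cons v xs)
  have "htc_step m D B v S \<subseteq> {1..m}" using htc_step_bounds(2)[of m D B v S] Cons.prems by auto
  then show ?case using Cons.IH[of "htc_step m D B v S"] Cons.prems htc_step_bounds(1)[of S m D B v] by auto
qed simp

lemma fold_steps_fixpoint:
  "set xs \<subseteq> {1..m} \<Longrightarrow> S \<subseteq> {1..m} \<Longrightarrow> fold (htc_step m D B) xs S = S \<Longrightarrow>
    \<forall>v\<in>set xs. htc_step m D B v S = S"
proof (induction xs arbitrary: S)
  case (Cons v xs)
  have "htc_step m D B v S \<subseteq> {1..m}" using htc_step_bounds(2)[of m D B v S] Cons.prems by auto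
  then have "htc_step m D B v S \<subseteq> S"
    using fold_steps_bounds[of xs m "htc_step m D B v S" D B] Cons.prems by auto
  then have e: "htc_step m D B v S = S" using htc_step_bounds(1)[of S m D B v] by blast
  then show ?case using Cons.IH[of S] Cons.prems by auto
qed simp

lemma htc_pass_bounds: "S \<subseteq> {1..m} \<Longrightarrow> S \<subseteq> htc_pass m D B S \<and> htc_pass m D B S \<subseteq> {1..m}"
  unfolding htc_pass_def by (rule fold_steps_bounds) auto

lemma htc_pass_fixpoint:
  assumes "S \<subseteq> {1..m}" "htc_pass m D B S = S" "v \<in> {1..m}"
  shows "htc_step m D B v S = S"
proof -
  have "\<forall>v\<in>set [1..<Suc m]. htc_step m D B v S = S"
    by (rule fold_steps_fixpoint) (use assms in \<open>auto simp: htc_pass_def\<close>)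
  moreover have "v \<in> set [1..<Suc m]" using assms(3) by auto
  ultimately show ?thesis by blast
qed

text \<open>The procedure always stops, since every continuing pass strictly enlarges \<open>S \<subseteq> V\<close>.\<close>

lemma htc_procedure_stops:
  obtains t where "htc_procedure m D B = Some t" "t \<subseteq> {1..m}" "t = {1..m} \<or> htc_pass m D B t = t"
proof -
  define b where "b S \<longleftrightarrow> S \<noteq> {1..m} \<and> htc_pass m D B S \<noteq> S" for S
  define S0 where "S0 = {v \<in> {1..m}. pa D v = {}}"
  have "\<exists>t. while_option b (htc_pass m D B) S0 = Some t"
  proof (rule measure_while_option_Some[where P = "\<lambda>S. S \<subseteq> {1..m}" and f = "\<lambda>S. card ({1..m} - S)"])
    fix S assume S: "S \<subseteq> {1..m}" and bS: "b S"
    have p: "S \<subseteq> htc_pass m D B S" "htc_pass m D B S \<subseteq> {1..m}" using htc_pass_bounds[OF S] by auto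
    then have "{1..m} - htc_pass m D B S \<subset> {1..m} - S" using bS by (auto simp: b_def)
    then have "card ({1..m} - htc_pass m D B S) < card ({1..m} - S)" by (rule psubset_card_mono[rotated]) simp
    then show "htc_pass m D B S \<subseteq> {1..m} \<and> card ({1..m} - htc_pass m D B S) < card ({1..m} - S)"
      using p by blast
  qed (auto simp: S0_def)
  then obtain t where t: "while_option b (htc_pass m D B) S0 = Some t" by blast
  have "t \<subseteq> {1..m}"
    by (rule while_option_rule[OF _ t, where P = "\<lambda>S. S \<subseteq> {1..m}"])
       (use htc_pass_bounds in \<open>auto simp: S0_def\<close>)
  moreover have "\<not> b t" using while_option_stop[OF t] .
  ultimately show ?thesis using that t unfolding htc_procedure_def b_def S0_def by blast
qed

text \<open>For
  \<open>S = V\<close> this is HTC-identifiability; the procedure maintains it as an invariant.\<close>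

definition htc_certified :: "nat \<Rightarrow> (nat \<times> nat) set \<Rightarrow> (nat \<times> nat) set \<Rightarrow> nat set \<Rightarrow> bool" where
  "htc_certified m D B S \<longleftrightarrow> S \<subseteq> {1..m} \<and> (\<exists>Ys R. R \<subseteq> S \<times> S \<and> strict_linear_order_on S R \<and>
     (\<forall>v\<in>S. htc_criterion m D B v (Ys v) \<and> (\<forall>w \<in> Ys v \<inter> htr m D B v. (w, v) \<in> R)))"

lemma certified_identifiable:
  assumes "htc_certified m D B {1..m}"
  shows "HTC_identifiable m D B"
proof -
  obtain Ys R where "strict_linear_order_on {1..m} R"
    "\<forall>v\<in>{1..m}. htc_criterion m D B v (Ys v) \<and> (\<forall>w \<in> Ys v \<inter> htr m D B v. (w, v) \<in> R)"
    using assms unfolding htc_certified_def by blast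
  then show ?thesis unfolding HTC_identifiable_def by blast
qed

lemma strict_linear_order_on_insert:
  assumes R: "strict_linear_order_on S R" "R \<subseteq> S \<times> S" and v: "v \<notin> S"
  shows "strict_linear_order_on (insert v S) (R \<union> S \<times> {v})"
proof -
  have t: "trans R" and i: "irrefl R" and to: "total_on S R"
    using R(1) by (auto simp: strict_linear_order_on_def)
  have "trans (R \<union> S \<times> {v})"
  proof (rule transI)
    fix a b c assume ab: "(a, b) \<in> R \<union> S \<times> {v}" and bc: "(b, c) \<in> R \<union> S \<times> {v}"
    show "(a, c) \<in> R \<union> S \<times> {v}"
    proof (cases "(a, b) \<in> R")
      case True
      then have "a \<in> S" "b \<in> S" using R(2) by auto
      then show ?thesis using bc True t by (auto dest: transD)
    next
      case False
      then have "b = v" using ab by simp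
      then show ?thesis using bc R(2) v by auto
    qed
  qed
  moreover have "irrefl (R \<union> S \<times> {v})" using i v by (auto simp: irrefl_def)
  moreover have "total_on (insert v S) (R \<union> S \<times> {v})" using to by (auto simp: total_on_def)
  ultimately show ?thesis by (simp add: strict_linear_order_on_def)
qed

text \<open>Vertices without parents are certified by \<open>Y_v = {}\<close> and any order.\<close>

lemma certified_init: "htc_certified m D B {v \<in> {1..m}. pa D v = {}}"
proof -
  define S0 where "S0 = {v \<in> {1..m}. pa D v = {}}"
  define R where "R = {(a, b). a \<in> S0 \<and> b \<in> S0 \<and> a < (b::nat)}"
  have "R \<subseteq> S0 \<times> S0" by (auto simp: R_def)
  moreover have "strict_linear_order_on S0 R"
    by (auto simp: strict_linear_order_on_def R_def trans_def irrefl_def total_on_def)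
  moreover have "\<forall>v\<in>S0. htc_criterion m D B v {} \<and> (\<forall>w \<in> {} \<inter> htr m D B v. (w, v) \<in> R)"
    by (auto simp: S0_def htc_criterion_def ht_system_def bij_betw_def)
  ultimately show ?thesis unfolding htc_certified_def S0_def
    by (intro conjI exI[of _ "\<lambda>_. {}"] exI[of _ R]) auto
qed

text \<open>A step that adds \<open>v\<close> found \<open>Y_v \<subseteq> (S \<union> (V - htr(v))) - ({v} \<union> sib(v))\<close>; placing \<open>v\<close>
  above all of \<open>S\<close> respects the ordering condition for \<open>v\<close>.\<close>

lemma certified_step:
  assumes VD: "D \<subseteq> {1..m} \<times> {1..m}" and VB: "B \<subseteq> {1..m} \<times> {1..m}"
    and v: "v \<in> {1..m}" and cert: "htc_certified m D B S"
  shows "htc_certified m D B (htc_step m D B v S)"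
proof (cases "htc_step m D B v S = S")
  case False
  have S: "S \<subseteq> {1..m}" using cert by (simp add: htc_certified_def)
  obtain Ys R where R: "R \<subseteq> S \<times> S" "strict_linear_order_on S R"
    and C: "\<forall>u\<in>S. htc_criterion m D B u (Ys u) \<and> (\<forall>w \<in> Ys u \<inter> htr m D B u. (w, u) \<in> R)"
    using cert unfolding htc_certified_def by blast
  have cond: "v \<notin> S \<and> (\<exists>Y \<subseteq> htc_A m D B S v. htc_criterion m D B v Y)"
    using False htc_step_iff[OF VD VB S, of v] by (cases "v \<notin> S \<and> (\<exists>Y \<subseteq> htc_A m D B S v. htc_criterion m D B v Y)") simp_all
  then have step: "htc_step m D B v S = insert v S" using htc_step_iff[OF VD VB S, of v] by simp
  obtain Y where Y: "Y \<subseteq> htc_A m D B S v" "htc_criterion m D B v Y" using cond by blast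
  have vS: "v \<notin> S" using cond by blast
  define R' where "R' = R \<union> S \<times> {v}"
  have "R' \<subseteq> insert v S \<times> insert v S" using R(1) by (auto simp: R'_def)
  moreover have "strict_linear_order_on (insert v S) R'"
    unfolding R'_def by (rule strict_linear_order_on_insert[OF R(2,1) vS])
  moreover have "\<forall>w \<in> Y \<inter> htr m D B v. (w, v) \<in> R'"
    using Y(1) by (auto simp: htc_A_def R'_def)
  then have "\<forall>u\<in>insert v S. htc_criterion m D B u ((Ys(v := Y)) u)
      \<and> (\<forall>w \<in> (Ys(v := Y)) u \<inter> htr m D B u. (w, u) \<in> R')"
    using C Y(2) vS by (auto simp: R'_def)
  moreover have "insert v S \<subseteq> {1..m}" using S v by auto
  ultimately show ?thesis unfolding htc_certified_def step by blast
qed (use cert in simp)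

lemma certified_pass:
  assumes "D \<subseteq> {1..m} \<times> {1..m}" "B \<subseteq> {1..m} \<times> {1..m}" "htc_certified m D B S"
  shows "htc_certified m D B (htc_pass m D B S)"
proof -
  have "htc_certified m D B (fold (htc_step m D B) xs S)" if "set xs \<subseteq> {1..m}" for xs
    using that assms(3)
  proof (induction xs arbitrary: S)
    case (Cons a xs)
    then show ?case using certified_step[OF assms(1,2), of a S] by simp
  qed simp
  moreover have "set [1..<Suc m] \<subseteq> {1..m}" by auto
  ultimately show ?thesis unfolding htc_pass_def by blast
qed

lemma procedure_certified:
  assumes "D \<subseteq> {1..m} \<times> {1..m}" "B \<subseteq> {1..m} \<times> {1..m}" "htc_procedure m D B = Some S"
  shows "htc_certified m D B S"
  by (rule while_option_rule[OF _ assms(3)[unfolded htc_procedure_def]])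
     (use certified_pass[OF assms(1,2)] certified_init in auto)

lemma strict_linear_order_minimal:
  assumes R: "strict_linear_order_on V R" and fV: "finite V" and Q: "x \<in> Q" "Q \<subseteq> V"
  shows "\<exists>z\<in>Q. \<forall>y\<in>V. (y, z) \<in> R \<longrightarrow> y \<notin> Q"
proof -
  have t: "trans R" and i: "irrefl R" using R by (auto simp: strict_linear_order_on_def)
  have tr: "trans (R \<inter> V \<times> V)" using t by (auto simp: trans_def)
  have "acyclic (R \<inter> V \<times> V)"
    unfolding acyclic_def using trancl_id[OF tr] i by (auto simp: irrefl_def)
  moreover have "finite (R \<inter> V \<times> V)" using fV by (auto intro: finite_subset)
  ultimately have "wf (R \<inter> V \<times> V)" by (metis finite_acyclic_wf)
  then obtain z where z: "z \<in> Q" "\<And>y. (y, z) \<in> R \<inter> V \<times> V \<Longrightarrow> y \<notin> Q"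
    using Q(1) by (rule wfE_min) auto
  then show ?thesis using Q(2) by blast
qed

text \<open>Completeness: if \<open>G\<close> is HTC-identifiable, the only stable set of the procedure is \<open>V\<close>.
  Otherwise the order-least vertex \<open>v \<notin> S\<close> has all \<open>w \<in> Y_v \<inter> htr(v)\<close> in \<open>S\<close>, so
  \<open>Y_v \<subseteq> A\<close> and the step at \<open>v\<close> would add it.\<close>

lemma identifiable_stable_set:
  assumes VD: "D \<subseteq> {1..m} \<times> {1..m}" and VB: "B \<subseteq> {1..m} \<times> {1..m}"
    and ident: "HTC_identifiable m D B" and S: "S \<subseteq> {1..m}" and stable: "htc_pass m D B S = S"
  shows "S = {1..m}"
proof (rule ccontr)
  assume "S \<noteq> {1..m}"
  then obtain x where x: "x \<in> {1..m} - S" using S by blast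
  obtain Ys R where C: "\<forall>v\<in>{1..m}. htc_criterion m D B v (Ys v)"
    and R: "strict_linear_order_on {1..m} R"
    and O: "\<forall>v\<in>{1..m}. \<forall>w \<in> Ys v \<inter> htr m D B v. (w, v) \<in> R"
    using ident unfolding HTC_identifiable_def by blast
  obtain v where v: "v \<in> {1..m} - S" and vmin: "\<forall>y\<in>{1..m}. (y, v) \<in> R \<longrightarrow> y \<notin> {1..m} - S"
    using strict_linear_order_minimal[OF R _ x] by blast
  have Cv: "htc_criterion m D B v (Ys v)" using C v by blast
  have "Ys v \<subseteq> htc_A m D B S v"
  proof
    fix w assume w: "w \<in> Ys v"
    have wV: "w \<in> {1..m}" and wn: "w \<notin> {v} \<union> sib B v"
      using Cv w by (auto simp: htc_criterion_def)
    have "w \<in> S" if "w \<in> htr m D B v" using O v w that vmin wV by blast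
    then show "w \<in> htc_A m D B S v" using wV wn by (auto simp: htc_A_def)
  qed
  then have "htc_step m D B v S = insert v S" using htc_step_iff[OF VD VB S, of v] Cv v by auto
  moreover have "htc_step m D B v S = S" using htc_pass_fixpoint[OF S stable] v by blast
  ultimately show False using v by blast
qed

theorem mainTheorem9:
  fixes m :: nat and D B :: "(nat \<times> nat) set"
  assumes "D \<subseteq> {1..m} \<times> {1..m}" and "B \<subseteq> {1..m} \<times> {1..m}"
    and "sym B" and "\<forall>v. (v, v) \<notin> D" and "\<forall>v. (v, v) \<notin> B"
  shows "HTC_identifiable m D B \<longleftrightarrow> htc_procedure m D B = Some {1..m}"
proof
  assume ident: "HTC_identifiable m D B"
  obtain t where t: "htc_procedure m D B = Some t" "t \<subseteq> {1..m}" "t = {1..m} \<or> htc_pass m D B t = t"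
    by (rule htc_procedure_stops)
  then have "t = {1..m}" using identifiable_stable_set[OF assms(1,2) ident] by blast
  then show "htc_procedure m D B = Some {1..m}" using t(1) by simp
next
  assume "htc_procedure m D B = Some {1..m}"
  then show "HTC_identifiable m D B"
    using certified_identifiable procedure_certified[OF assms(1,2)] by blast
qed

end
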